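(* Let $\eta,\xi\in\Omega_n$ with $\eta\preceq\xi$ and let $i\in\{1,\dots,n\}$. Let $a=\min\{\xi(i-1),\xi(i+1)\}$, $b=\max\{\xi(i-1),\xi(i+1)\}$, $c=\min\{\eta(i-1),\eta(i+1)\}$, $d=\max\{\eta(i-1),\eta(i+1)\}$. Then $$0\le m(a,b)-m(c,d)\le\frac{a+b}{2}-\frac{c+d}{2},$$ where $m(x,y)$ denotes the expected value of a random variable with law $\mu_{xy}$.
   Context: Fix $\beta>0$ and integer $n\ge1$. $\Omega_n=\{0,\dots,n\}^n$, with boundary convention $\eta(0)=\eta(n+1)=0$ for every configuration. Partial order: $\eta\preceq\xi$ iff $\eta(i)\le\xi(i)$ for all $i\in\{1,\dots,n\}$. For integers $0\le x\le y\le n$, $\mu_{xy}$ is the distribution on $\{0,\dots,n\}$ with $\mu_{xy}(j)\propto e^{-2\beta(x-j)}$ for $0\le j<x$, $\mu_{xy}(j)\propto 1$ for $x\le j\le y$, and $\mu_{xy}(j)\propto e^{-2\beta(j-y)}$ for $y<j\le n$. Thus $m(a,b)$ and $m(c,d)$ are the expected new heights at $i$ after a column (heat-bath) update at position $i$ in configurations $\xi$ and $\eta$ respectively, for the SOS Gibbs distribution $\mu(\eta)\propto\exp\{-\beta\sum_{k=1}^{n+1}|\eta(k-1)-\eta(k)|\}$. *)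

theory Defs
  imports Complex_Main
begin

text \<open>Configurations are functions nat to nat; only the values at 1..n matter.
  The boundary convention eta(0) = eta(n+1) = 0 is imposed by bnd.\<close>

definition Omega :: "nat \<Rightarrow> (nat \<Rightarrow> nat) set" where
  "Omega n = {\<eta>. \<forall>i\<in>{1..n}. \<eta> i \<le> n}"

definition bnd :: "nat \<Rightarrow> (nat \<Rightarrow> nat) \<Rightarrow> nat \<Rightarrow> nat" where
  "bnd n \<eta> k = (if k = 0 \<or> k = n + 1 then 0 else \<eta> k)"

definition preceq :: "nat \<Rightarrow> (nat \<Rightarrow> nat) \<Rightarrow> (nat \<Rightarrow> nat) \<Rightarrow> bool" where
  "preceq n \<eta> \<xi> \<longleftrightarrow> (\<forall>i\<in>{1..n}. \<eta> i \<le> \<xi> i)"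

definition wt :: "real \<Rightarrow> nat \<Rightarrow> nat \<Rightarrow> nat \<Rightarrow> real" where
  "wt \<beta> x y j = (if j < x then exp (-2*\<beta>*(real x - real j))
                  else if j \<le> y then 1
                  else exp (-2*\<beta>*(real j - real y)))"

definition mu :: "real \<Rightarrow> nat \<Rightarrow> nat \<Rightarrow> nat \<Rightarrow> nat \<Rightarrow> real" where
  "mu \<beta> n x y j = wt \<beta> x y j / (\<Sum>k=0..n. wt \<beta> x y k)"

definition m :: "real \<Rightarrow> nat \<Rightarrow> nat \<Rightarrow> nat \<Rightarrow> real" where
  "m \<beta> n x y = (\<Sum>j=0..n. real j * mu \<beta> n x y j)"

end

theory Submission
  imports Defs
begin

text \<open>Write \<open>q = exp (-2\<beta>)\<close>. The weights of \<open>\<mu>\<^sub>x\<^sub>y\<close> are \<open>q\<close> to the power of the distance from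
  \<open>j\<close> to \<open>[x, y]\<close>, so raising \<open>y\<close> by one keeps the weights at or below \<open>y\<close> and divides
  those above \<open>y\<close> by \<open>q\<close>. This tilt moves the mean up, and by at most \<open>1/2\<close>: for untruncated
  geometric tails on both sides it moves by exactly \<open>1/2\<close>, and truncation at \<open>0\<close> and \<open>n\<close>
  only helps. Raising \<open>x\<close> is the mirror image under \<open>j \<mapsto> n - j\<close>. Walking from \<open>(c, d)\<close>
  to \<open>(a, b)\<close> one unit step at a time gives both bounds.\<close>

lemma wt_eq_power:
  assumes "x \<le> y"
  shows "wt \<beta> x y j = exp (-2*\<beta>) ^ (x - j + (j - y))"
proof -
  have exp_nat: "exp (-2*\<beta>*real k) = exp (-2*\<beta>) ^ k" for k
    by (metis exp_of_nat_mult mult.commute)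
  consider "j < x" | "x \<le> j" "j \<le> y" | "y < j" by linarith
  then show ?thesis
  proof cases
    case 1
    then show ?thesis using assms exp_nat[of "x - j"] by (simp add: wt_def of_nat_diff)
  next
    case 2
    then show ?thesis by (simp add: wt_def)
  next
    case 3
    then show ?thesis using assms exp_nat[of "j - y"] by (simp add: wt_def of_nat_diff)
  qed
qed

lemma wt_pos: "0 < wt \<beta> x y j"
  by (simp add: wt_def)

lemma m_eq_weighted_mean:
  "m \<beta> n x y = (\<Sum>j=0..n. real j * wt \<beta> x y j) / (\<Sum>j=0..n. wt \<beta> x y j)"
  by (simp add: m_def mu_def sum_divide_distrib)

lemma sum_split_at:
  fixes w :: "nat \<Rightarrow> 'a::comm_monoid_add"
  assumes "y \<le> n"
  shows "(\<Sum>j=0..n. w j) = (\<Sum>j=0..y. w j) + (\<Sum>k=1..n-y. w (y + k))"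
proof -
  have "(\<Sum>j=0..n. w j) = (\<Sum>j=0..y. w j) + (\<Sum>j=Suc y..n. w j)"
    using sum.ub_add_nat[of 0 y w "n - y"] assms by simp
  also have "(\<Sum>j=Suc y..n. w j) = (\<Sum>k=1..n-y. w (y + k))"
    by (rule sum.reindex_bij_witness[where i="\<lambda>k. y + k" and j="\<lambda>j. j - y"]) auto
  finally show ?thesis .
qed

lemma weighted_mean_split:
  fixes w :: "nat \<Rightarrow> real"
  assumes "y \<le> n" and "(\<Sum>j=0..n. w j) \<noteq> 0"
  shows "(\<Sum>j=0..n. real j * w j) / (\<Sum>j=0..n. w j) = real y +
    ((\<Sum>k=1..n-y. real k * w (y + k)) - (\<Sum>j=0..y. (real y - real j) * w j))
      / ((\<Sum>j=0..y. w j) + (\<Sum>k=1..n-y. w (y + k)))"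
proof -
  have lower: "(\<Sum>j=0..y. real j * w j) = real y * (\<Sum>j=0..y. w j) - (\<Sum>j=0..y. (real y - real j) * w j)"
    by (simp add: sum_distrib_left sum_subtractf[symmetric] algebra_simps)
  have upper: "(\<Sum>k=1..n-y. real (y + k) * w (y + k))
      = real y * (\<Sum>k=1..n-y. w (y + k)) + (\<Sum>k=1..n-y. real k * w (y + k))"
    by (simp add: sum_distrib_left sum.distrib[symmetric] algebra_simps)
  have moment: "(\<Sum>j=0..n. real j * w j) = real y * (\<Sum>j=0..n. w j)
      + ((\<Sum>k=1..n-y. real k * w (y + k)) - (\<Sum>j=0..y. (real y - real j) * w j))"
    using sum_split_at[OF assms(1), of w] sum_split_at[OF assms(1), of "\<lambda>j. real j * w j"] lower upper
    by (simp add: algebra_simps)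
  have total: "(\<Sum>j=0..y. w j) + (\<Sum>k=1..n-y. w (y + k)) = (\<Sum>j=0..n. w j)"
    using sum_split_at[OF assms(1), of w] by simp
  show ?thesis
    unfolding total moment using assms(2) by (simp add: add_divide_distrib)
qed

lemma one_minus_mult_sum_power_le:
  fixes q :: real
  assumes "0 \<le> q"
  shows "(1 - q) * (\<Sum>k=1..K. q ^ k) \<le> q"
proof (cases "K = 0")
  case False
  then show ?thesis using sum_gp_multiplied[of 1 K q] assms by simp
qed (use assms in simp)

lemma one_minus_mult_sum_index_power:
  fixes q :: real
  shows "(1 - q) * (\<Sum>k=1..K. real k * q ^ k) = (\<Sum>k=1..K. q ^ k) - real K * q ^ Suc K"
proof (induction K)
  case (Suc K)
  have "(1 - q) * (\<Sum>k=1..Suc K. real k * q ^ k)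
      = (1 - q) * (\<Sum>k=1..K. real k * q ^ k) + (1 - q) * (real K + 1) * q ^ Suc K"
    by (simp add: algebra_simps)
  also have "\<dots> = (\<Sum>k=1..Suc K. q ^ k) - real (Suc K) * q ^ Suc (Suc K)"
    by (simp only: Suc.IH) (simp add: algebra_simps)
  finally show ?case .
qed simp

lemma one_minus_mult_sum_index_power_le:
  fixes q :: real
  assumes "0 \<le> q"
  shows "(1 - q) * (\<Sum>k=1..K. real k * q ^ k) \<le> (\<Sum>k=1..K. q ^ k)"
  unfolding one_minus_mult_sum_index_power using assms by simp

definition lower_mass :: "real \<Rightarrow> nat \<Rightarrow> nat \<Rightarrow> real" where
  "lower_mass q x y = (\<Sum>j=0..y. q ^ (x - j))"

definition lower_moment :: "real \<Rightarrow> nat \<Rightarrow> nat \<Rightarrow> real" where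
  "lower_moment q x y = (\<Sum>j=0..y. (real y - real j) * q ^ (x - j))"

lemma lower_mass_pos: "0 < q \<Longrightarrow> 0 < lower_mass q x y"
  unfolding lower_mass_def by (intro sum_pos) auto

lemma lower_moment_nonneg: "0 \<le> q \<Longrightarrow> 0 \<le> lower_moment q x y"
  unfolding lower_moment_def by (intro sum_nonneg) auto

lemma lower_mass_Suc: "x \<le> y \<Longrightarrow> lower_mass q x (Suc y) = lower_mass q x y + 1"
  by (simp add: lower_mass_def)

lemma lower_moment_Suc: "lower_moment q x (Suc y) = lower_moment q x y + lower_mass q x y"
proof -
  have "lower_moment q x (Suc y) = (\<Sum>j=0..y. (real y - real j) * q ^ (x - j) + q ^ (x - j))"
    by (simp add: lower_moment_def algebra_simps)
  then show ?thesis by (simp add: lower_moment_def lower_mass_def sum.distrib)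
qed

lemma lower_mass_diagonal_Suc: "lower_mass q (Suc y) (Suc y) = 1 + q * lower_mass q y y"
proof -
  have "lower_mass q (Suc y) (Suc y) = (\<Sum>j=0..y. q * q ^ (y - j)) + 1"
    by (simp add: lower_mass_def Suc_diff_le)
  then show ?thesis by (simp add: lower_mass_def sum_distrib_left)
qed

lemma lower_moment_diagonal_Suc:
  "lower_moment q (Suc y) (Suc y) = q * (lower_moment q y y + lower_mass q y y)"
proof -
  have "lower_moment q (Suc y) (Suc y) = (\<Sum>j=0..y. q * ((real y - real j) * q ^ (y - j) + q ^ (y - j)))"
    by (simp add: lower_moment_def Suc_diff_le algebra_simps)
  also have "\<dots> = q * (\<Sum>j=0..y. (real y - real j) * q ^ (y - j) + q ^ (y - j))"
    by (simp add: sum_distrib_left)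
  finally show ?thesis by (simp add: lower_moment_def lower_mass_def sum.distrib)
qed

lemma lower_sums_diagonal_bounds:
  fixes q :: real
  assumes q: "0 < q" "q < 1"
  defines "A y \<equiv> lower_mass q y y" and "V y \<equiv> lower_moment q y y"
  shows "(1 - q) * A y \<le> 1 \<and> 2 * V y + A y - (A y)\<^sup>2 \<le> q / (1 - q)\<^sup>2
    \<and> 2 * V y + A y - (A y)\<^sup>2 \<le> (A y)\<^sup>2"
proof (induction y)
  case 0
  show ?case using q by (simp add: A_def V_def lower_mass_def lower_moment_def)
next
  case (Suc y)
  let ?A = "A y" and ?V = "V y"
  have mass_le: "(1 - q) * ?A \<le> 1" and spread_le: "2 * ?V + ?A - ?A\<^sup>2 \<le> q / (1 - q)\<^sup>2"
    and spread_le_sq: "2 * ?V + ?A - ?A\<^sup>2 \<le> ?A\<^sup>2" using Suc.IH by auto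
  have A_pos: "0 < ?A" using q by (simp add: A_def lower_mass_pos)
  have A_Suc: "A (Suc y) = 1 + q * ?A" and V_Suc: "V (Suc y) = q * (?V + ?A)"
    by (simp_all add: A_def V_def lower_mass_diagonal_Suc lower_moment_diagonal_Suc)
  have spread_Suc: "2 * V (Suc y) + A (Suc y) - (A (Suc y))\<^sup>2
      = q * ((2 * ?V + ?A - ?A\<^sup>2) + (1 - q) * ?A\<^sup>2)"
    by (simp add: A_Suc V_Suc power2_eq_square algebra_simps)
  have sq_le: "(1 - q) * ?A\<^sup>2 \<le> ?A"
    using mult_left_mono[OF mass_le, of ?A] A_pos by (simp add: power2_eq_square algebra_simps)
  have "(1 - q) * A (Suc y) \<le> 1"
    using mult_left_mono[OF mass_le, of q] q by (simp add: A_Suc algebra_simps)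
  moreover have "2 * V (Suc y) + A (Suc y) - (A (Suc y))\<^sup>2 \<le> q / (1 - q)\<^sup>2"
  proof -
    have "?A \<le> 1 / (1 - q)" using mass_le q by (simp add: field_simps)
    then have "(2 * ?V + ?A - ?A\<^sup>2) + (1 - q) * ?A\<^sup>2 \<le> q / (1 - q)\<^sup>2 + 1 / (1 - q)"
      using spread_le sq_le by linarith
    also have "\<dots> = 1 / (1 - q)\<^sup>2"
      using q by (simp add: divide_simps power2_eq_square)
    finally show ?thesis
      unfolding spread_Suc using q by (simp add: mult_left_mono divide_simps)
  qed
  moreover have "2 * V (Suc y) + A (Suc y) - (A (Suc y))\<^sup>2 \<le> (A (Suc y))\<^sup>2"
  proof -
    have "2 * V (Suc y) + A (Suc y) - (A (Suc y))\<^sup>2 \<le> q * (?A\<^sup>2 + ?A)"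
      unfolding spread_Suc using spread_le_sq sq_le q by (intro mult_left_mono) auto
    also have "\<dots> \<le> (A (Suc y))\<^sup>2"
      using mult_left_mono[OF mass_le, of "q * ?A"] q A_pos
      by (simp add: A_Suc power2_eq_square algebra_simps)
    finally show ?thesis .
  qed
  ultimately show ?case by blast
qed

text \<open>If the weights \<open>q ^ (x - j)\<close> continued below \<open>j = 0\<close>, the quantity \<open>2V + A - A\<^sup>2\<close> would
  be exactly \<open>q / (1 - q)\<^sup>2\<close>; the cut at \<open>j = 0\<close> only decreases it.\<close>

lemma lower_sums_bounds:
  fixes q :: real
  assumes q: "0 < q" "q < 1" and "x \<le> y"
  shows "2 * lower_moment q x y + lower_mass q x y - (lower_mass q x y)\<^sup>2 \<le> q / (1 - q)\<^sup>2
    \<and> 2 * lower_moment q x y + lower_mass q x y - (lower_mass q x y)\<^sup>2 \<le> (lower_mass q x y)\<^sup>2"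
  using \<open>x \<le> y\<close>
proof (induction y rule: dec_induct)
  case base
  then show ?case using lower_sums_diagonal_bounds[OF q] by blast
next
  case (step y)
  let ?A = "lower_mass q x y" and ?V = "lower_moment q x y"
  have "2 * lower_moment q x (Suc y) + lower_mass q x (Suc y) - (lower_mass q x (Suc y))\<^sup>2
      = 2 * ?V + ?A - ?A\<^sup>2"
    using step.hyps by (simp add: lower_mass_Suc lower_moment_Suc power2_eq_square algebra_simps)
  moreover have "?A\<^sup>2 \<le> (lower_mass q x (Suc y))\<^sup>2"
    using step.hyps lower_mass_pos[OF q(1), of x y] by (simp add: lower_mass_Suc power_mono)
  ultimately show ?case using step.IH by auto
qed

text \<open>\<open>A\<close>, \<open>V\<close> are the mass and the first moment of \<open>y - j\<close> of the weights at or below \<open>y\<close>,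
  \<open>B\<close>, \<open>U\<close> those of \<open>j - y\<close> above \<open>y\<close>. Raising \<open>y\<close> by one divides the upper weights by \<open>q\<close>,
  which moves the mean \<open>y + (U - V) / (A + B)\<close> to \<open>y + (U/q - V) / (A + B/q)\<close>.\<close>

lemma tilted_mean_increment:
  fixes q A V B U :: real
  assumes q: "0 < q" "q < 1"
    and A: "0 < A" and V: "0 \<le> V" and B: "0 \<le> B" and U: "0 \<le> U"
    and B_le: "(1 - q) * B \<le> q" and U_le: "(1 - q) * U \<le> B"
    and spread_le: "2 * V + A - A\<^sup>2 \<le> q / (1 - q)\<^sup>2"
    and spread_le_sq: "2 * V + A - A\<^sup>2 \<le> A\<^sup>2"
  shows "0 \<le> (U / q - V) / (A + B / q) - (U - V) / (A + B)"
    and "(U / q - V) / (A + B / q) - (U - V) / (A + B) \<le> 1 / 2"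
proof -
  have den: "0 < q * A + B" "0 < A + B" using q A B by (simp_all add: add_pos_nonneg)
  have "U / q - V = (U - q * V) / q" "A + B / q = (q * A + B) / q"
    using q by (simp_all add: field_simps)
  then have tilt: "(U / q - V) / (A + B / q) = (U - q * V) / (q * A + B)"
    using q by simp
  have increment: "(U / q - V) / (A + B / q) - (U - V) / (A + B)
      = (1 - q) * (U * A + V * B) / ((q * A + B) * (A + B))"
    unfolding tilt using den by (simp add: diff_frac_eq algebra_simps)
  show "0 \<le> (U / q - V) / (A + B / q) - (U - V) / (A + B)"
    unfolding increment using q A V B U den by simp
  define D P e where "D = 2 * V + A - A\<^sup>2" and "P = (1 - q) * B" and "e = q / (1 - q)\<^sup>2"
  have P: "0 \<le> P" "P \<le> q" using q B B_le by (simp_all add: P_def)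
  have B_sq: "B\<^sup>2 = P\<^sup>2 * e / q"
    using q by (simp add: P_def e_def power_mult_distrib)
  have "q * P * D - P\<^sup>2 * e = P\<^sup>2 * (D - e) + P * (q - P) * D"
    by (simp add: power2_eq_square algebra_simps)
  also have "\<dots> \<le> P * (q - P) * D"
    using spread_le P by (simp add: D_def e_def mult_nonneg_nonpos)
  also have "\<dots> \<le> P * (q - P) * A\<^sup>2"
    using spread_le_sq P by (intro mult_left_mono) (auto simp: D_def)
  also have "\<dots> \<le> q * (q - P) * A\<^sup>2"
    using P by (intro mult_right_mono) auto
  finally have "q * (P * (D + A\<^sup>2)) \<le> q * (q * A\<^sup>2 + B\<^sup>2)"
    using q by (simp add: B_sq algebra_simps)
  then have upper_part: "P * (D + A\<^sup>2) \<le> q * A\<^sup>2 + B\<^sup>2"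
    using q by simp
  have lower_part: "(1 - q) * U * A \<le> B * A"
    using U_le A by (intro mult_right_mono) auto
  have "2 * ((1 - q) * (U * A + V * B)) = 2 * ((1 - q) * U * A) + P * (D + A\<^sup>2) - P * A"
    by (simp add: D_def P_def algebra_simps)
  also have "\<dots> \<le> (q * A + B) * (A + B)"
    using upper_part lower_part by (simp add: P_def power2_eq_square algebra_simps)
  finally show "(U / q - V) / (A + B / q) - (U - V) / (A + B) \<le> 1 / 2"
    unfolding increment using den by (simp add: divide_simps)
qed

lemma m_Suc_right_increment:
  assumes "0 < \<beta>" and "x \<le> y" and "y < n"
  shows "0 \<le> m \<beta> n x (Suc y) - m \<beta> n x y \<and> m \<beta> n x (Suc y) - m \<beta> n x y \<le> 1 / 2"
proof -
  define q where "q = exp (-2*\<beta>)"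
  have q: "0 < q" "q < 1" using assms(1) by (simp_all add: q_def)
  have lower: "wt \<beta> x y j = q ^ (x - j)" "wt \<beta> x (Suc y) j = q ^ (x - j)" if "j \<le> y" for j
    using that assms(2) by (simp_all add: wt_eq_power q_def)
  have upper: "wt \<beta> x y (y + k) = q ^ k" "wt \<beta> x (Suc y) (y + k) = q ^ k / q" if "0 < k" for k
  proof -
    show "wt \<beta> x y (y + k) = q ^ k" using that assms(2) by (simp add: wt_eq_power q_def)
    have "q ^ k = q * q ^ (k - 1)" using that by (simp flip: power_Suc)
    then show "wt \<beta> x (Suc y) (y + k) = q ^ k / q"
      using that assms(2) q by (simp add: wt_eq_power q_def)
  qed
  define A V B U where "A = lower_mass q x y" and "V = lower_moment q x y"
    and "B = (\<Sum>k=1..n-y. q ^ k)" and "U = (\<Sum>k=1..n-y. real k * q ^ k)"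
  have sums:
    "(\<Sum>j=0..y. wt \<beta> x y j) = A"
    "(\<Sum>j=0..y. (real y - real j) * wt \<beta> x y j) = V"
    "(\<Sum>j=0..y. wt \<beta> x (Suc y) j) = A"
    "(\<Sum>j=0..y. (real y - real j) * wt \<beta> x (Suc y) j) = V"
    "(\<Sum>k=1..n-y. wt \<beta> x y (y + k)) = B"
    "(\<Sum>k=1..n-y. real k * wt \<beta> x y (y + k)) = U"
    "(\<Sum>k=1..n-y. wt \<beta> x (Suc y) (y + k)) = B / q"
    "(\<Sum>k=1..n-y. real k * wt \<beta> x (Suc y) (y + k)) = U / q"
    by (simp_all add: A_def V_def B_def U_def lower_mass_def lower_moment_def lower upper
        sum_divide_distrib)
  have total_nonzero: "(\<Sum>j=0..n. wt \<beta> x y' j) \<noteq> 0" for y'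
    using sum_pos[of "{0..n}" "wt \<beta> x y'"] by (simp add: wt_pos)
  have yn: "y \<le> n" using assms(3) by simp
  have "m \<beta> n x y = real y + (U - V) / (A + B)"
    and "m \<beta> n x (Suc y) = real y + (U / q - V) / (A + B / q)"
    unfolding m_eq_weighted_mean weighted_mean_split[OF yn total_nonzero] sums by simp_all
  moreover have "0 \<le> (U / q - V) / (A + B / q) - (U - V) / (A + B)"
    and "(U / q - V) / (A + B / q) - (U - V) / (A + B) \<le> 1 / 2"
  proof -
    have "0 < A" "0 \<le> V" "0 \<le> B" "0 \<le> U"
      using q by (auto simp: A_def V_def B_def U_def lower_mass_pos lower_moment_nonneg
          intro!: sum_nonneg)
    moreover have "(1 - q) * B \<le> q" "(1 - q) * U \<le> B"
      unfolding B_def U_def using q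
      by (simp_all only: one_minus_mult_sum_power_le one_minus_mult_sum_index_power_le less_imp_le)
    moreover have "2 * V + A - A\<^sup>2 \<le> q / (1 - q)\<^sup>2" "2 * V + A - A\<^sup>2 \<le> A\<^sup>2"
      using lower_sums_bounds[OF q assms(2)] by (simp_all add: A_def V_def)
    ultimately show "0 \<le> (U / q - V) / (A + B / q) - (U - V) / (A + B)"
      and "(U / q - V) / (A + B / q) - (U - V) / (A + B) \<le> 1 / 2"
      using tilted_mean_increment[OF q] by blast+
  qed
  ultimately show ?thesis by simp
qed

lemma wt_reflect:
  assumes "x \<le> y" "y \<le> n" "j \<le> n"
  shows "wt \<beta> x y (n - j) = wt \<beta> (n - y) (n - x) j"
proof -
  have "x - (n - j) + (n - j - y) = n - y - j + (j - (n - x))" using assms by arith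
  then show ?thesis using assms by (simp add: wt_eq_power)
qed

lemma m_reflect:
  assumes "x \<le> y" "y \<le> n"
  shows "m \<beta> n x y = real n - m \<beta> n (n - y) (n - x)"
proof -
  define w where "w = wt \<beta> (n - y) (n - x)"
  have mass: "(\<Sum>j=0..n. wt \<beta> x y j) = (\<Sum>j=0..n. w j)"
    using sum.atLeastAtMost_rev[of "wt \<beta> x y" 0 n] by (simp add: w_def wt_reflect assms)
  have "(\<Sum>j=0..n. real j * wt \<beta> x y j) = (\<Sum>j=0..n. real (n - j) * w j)"
    using sum.atLeastAtMost_rev[of "\<lambda>j. real j * wt \<beta> x y j" 0 n]
    by (simp add: w_def wt_reflect assms)
  also have "\<dots> = real n * (\<Sum>j=0..n. w j) - (\<Sum>j=0..n. real j * w j)"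
    by (simp add: of_nat_diff sum_distrib_left sum_subtractf[symmetric] algebra_simps)
  finally have moment: "(\<Sum>j=0..n. real j * wt \<beta> x y j)
      = real n * (\<Sum>j=0..n. w j) - (\<Sum>j=0..n. real j * w j)" .
  have "0 < (\<Sum>j=0..n. w j)" unfolding w_def by (rule sum_pos) (auto simp: wt_pos)
  then show ?thesis
    unfolding m_eq_weighted_mean mass moment by (simp add: w_def diff_divide_distrib)
qed

lemma m_Suc_left_increment:
  assumes "0 < \<beta>" and "x < y" and "y \<le> n"
  shows "0 \<le> m \<beta> n (Suc x) y - m \<beta> n x y \<and> m \<beta> n (Suc x) y - m \<beta> n x y \<le> 1 / 2"
proof -
  have "m \<beta> n x y = real n - m \<beta> n (n - y) (Suc (n - Suc x))"
    using m_reflect[of x y n \<beta>] assms by (simp add: Suc_diff_Suc)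
  moreover have "m \<beta> n (Suc x) y = real n - m \<beta> n (n - y) (n - Suc x)"
    using m_reflect[of "Suc x" y n \<beta>] assms by simp
  moreover have "0 \<le> m \<beta> n (n - y) (Suc (n - Suc x)) - m \<beta> n (n - y) (n - Suc x)
      \<and> m \<beta> n (n - y) (Suc (n - Suc x)) - m \<beta> n (n - y) (n - Suc x) \<le> 1 / 2"
    using assms by (intro m_Suc_right_increment) auto
  ultimately show ?thesis by simp
qed

lemma telescoping_increment_bounds:
  fixes f :: "nat \<Rightarrow> real"
  assumes "a \<le> b"
    and "\<And>k. a \<le> k \<Longrightarrow> k < b \<Longrightarrow> 0 \<le> f (Suc k) - f k \<and> f (Suc k) - f k \<le> C"
  shows "0 \<le> f b - f a \<and> f b - f a \<le> real (b - a) * C"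
  using assms
proof (induction b rule: dec_induct)
  case (step k)
  then have "0 \<le> f (Suc k) - f k \<and> f (Suc k) - f k \<le> C"
    and "0 \<le> f k - f a \<and> f k - f a \<le> real (k - a) * C" by auto
  moreover have "real (Suc k - a) * C = real (k - a) * C + C"
    using step.hyps by (simp add: Suc_diff_le algebra_simps)
  ultimately show ?case by linarith
qed simp

lemma m_difference_bounds:
  assumes "0 < \<beta>" and "c \<le> a" "d \<le> b" "a \<le> b" "c \<le> d" "b \<le> n"
  shows "0 \<le> m \<beta> n a b - m \<beta> n c d
    \<and> m \<beta> n a b - m \<beta> n c d \<le> (real a + real b) / 2 - (real c + real d) / 2"
proof -
  have left: "0 \<le> m \<beta> n a b - m \<beta> n c b
      \<and> m \<beta> n a b - m \<beta> n c b \<le> real (a - c) * (1 / 2)"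
    using assms
    by (intro telescoping_increment_bounds[where f = "\<lambda>x. m \<beta> n x b"] m_Suc_left_increment) auto
  have right: "0 \<le> m \<beta> n c b - m \<beta> n c d
      \<and> m \<beta> n c b - m \<beta> n c d \<le> real (b - d) * (1 / 2)"
    using assms
    by (intro telescoping_increment_bounds[where f = "m \<beta> n c"] m_Suc_right_increment) auto
  show ?thesis using left right assms(2,3) by (simp add: of_nat_diff field_simps)
qed

theorem corollary3p3:
  fixes \<beta> :: real and n i :: nat and \<eta> \<xi> :: "nat \<Rightarrow> nat"
  assumes "\<beta> > 0" and "n \<ge> 1"
    and "\<eta> \<in> Omega n" and "\<xi> \<in> Omega n" and "preceq n \<eta> \<xi>"
    and "i \<in> {1..n}"
  defines "a \<equiv> min (bnd n \<xi> (i-1)) (bnd n \<xi> (i+1))"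
    and "b \<equiv> max (bnd n \<xi> (i-1)) (bnd n \<xi> (i+1))"
    and "c \<equiv> min (bnd n \<eta> (i-1)) (bnd n \<eta> (i+1))"
    and "d \<equiv> max (bnd n \<eta> (i-1)) (bnd n \<eta> (i+1))"
  shows "0 \<le> m \<beta> n a b - m \<beta> n c d \<and>
         m \<beta> n a b - m \<beta> n c d \<le> (real a + real b)/2 - (real c + real d)/2"
proof (rule m_difference_bounds)
  have "bnd n \<eta> k \<le> bnd n \<xi> k" and "bnd n \<xi> k \<le> n" if "k \<le> n + 1" for k
    using that assms(4,5) by (auto simp: bnd_def preceq_def Omega_def not_less_eq_eq)
  moreover have "i - 1 \<le> n + 1" "i + 1 \<le> n + 1" using assms(6) by auto
  ultimately show "c \<le> a" "d \<le> b" "b \<le> n"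
    unfolding a_def b_def c_def d_def by (meson max.mono min.mono max.bounded_iff)+
  show "a \<le> b" "c \<le> d" by (simp_all add: a_def b_def c_def d_def)
qed (fact assms(1))

end
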